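(* Let $r\ge 2$ be a constant and $2r\le k\le n$. Consider the (1+1) EA with bit flip probability $1/n$ optimizing $\mathrm{Fork}_{k,r}$ on strings of length $k$, where $\mathrm{Fork}_{k,r}(x)=k+1$ if $x=0^r1^{k-r}$ (valley), $k+2$ if $x=1^{k-r}0^r$ (optimum), and $|x|_1$ otherwise. The probability $p_{ov}$ that the algorithm generates (as an offspring) the optimum or the valley during its way to $1^k$ satisfies $p_{ov}\in O\!\left(\frac{1}{k^{r-1}}\right)$.
   Context: The (1+1) EA with bit flip probability $1/n$: start with $x$ uniform in $\{0,1\}^k$; each iteration create $y$ by flipping each bit of $x$ independently with probability $1/n$ and set $x\gets y$ if $\mathrm{Fork}_{k,r}(y)\ge\mathrm{Fork}_{k,r}(x)$. "During its way to $1^k$" refers to the period before the current solution reaches fitness $k$ (the string $1^k$). *)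

theory Defs
  imports "HOL-Probability.Probability"
begin

text \<open>Bit strings of length k are boolean lists of length k (True = 1).\<close>

definition bitstrings :: "nat \<Rightarrow> bool list set" where
  "bitstrings k = {xs. length xs = k}"

definition ones :: "bool list \<Rightarrow> nat" where
  "ones x = length (filter id x)"

definition valley :: "nat \<Rightarrow> nat \<Rightarrow> bool list" where
  "valley k r = replicate r False @ replicate (k - r) True"

definition optimum :: "nat \<Rightarrow> nat \<Rightarrow> bool list" where
  "optimum k r = replicate (k - r) True @ replicate r False"

definition fork :: "nat \<Rightarrow> nat \<Rightarrow> bool list \<Rightarrow> nat" where
  "fork k r x = (if x = valley k r then k + 1
                 else if x = optimum k r then k + 2
                 else ones x)"

fun mutate :: "real \<Rightarrow> bool list \<Rightarrow> bool list pmf" where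
  "mutate p [] = return_pmf []"
| "mutate p (b # bs) =
     bind_pmf (bernoulli_pmf p) (\<lambda>f.
     bind_pmf (mutate p bs) (\<lambda>ys.
     return_pmf ((if f then \<not> b else b) # ys)))"

text \<open>Probability that, starting from current search point x and within at most T
  iterations of the (1+1) EA (mutation rate 1/n) on Fork_{k,r}, an offspring equal to
  the optimum or the valley is generated before the current search point is 1^k.\<close>
fun pov_within :: "nat \<Rightarrow> nat \<Rightarrow> nat \<Rightarrow> nat \<Rightarrow> bool list \<Rightarrow> real" where
  "pov_within k r n 0 x = 0"
| "pov_within k r n (Suc T) x =
     (if x = replicate k True then 0
      else measure_pmf.expectation (mutate (1 / real n) x)
             (\<lambda>y. if y = optimum k r \<or> y = valley k r then 1
                  else pov_within k r n T (if fork k r y \<ge> fork k r x then y else x)))"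

text \<open>The finite-horizon probabilities are nondecreasing in T; p_ov is their supremum.\<close>
definition p_ov :: "nat \<Rightarrow> nat \<Rightarrow> nat \<Rightarrow> real" where
  "p_ov k r n = (SUP T. measure_pmf.expectation (pmf_of_set (bitstrings k)) (pov_within k r n T))"

end

theory Submission
  imports Defs
begin

text \<open>Until an offspring equals the optimum or the valley, the (1+1) EA on Fork makes the same
  selections as on OneMax, so \<open>p_ov\<close> is at most the sum of the probabilities that the OneMax run
  generates these two strings, both of which have \<open>k - r\<close> ones. The OneMax run commutes with
  permutations of the bit positions and the uniform start is invariant under them, so from it
  all \<open>k choose r\<close> strings with \<open>k - r\<close> ones are generated with the same probability. Each of
  the two probabilities is therefore at most the expected number of offspring with \<open>k - r\<close> ones
  (differing from their parent) divided by \<open>k choose r \<ge> (k / r) ^ r\<close>. That expectation is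
  \<open>O(k r)\<close>: on the levels \<open>j \<ge> k - r\<close> an iteration creates a new offspring with probability
  at most \<open>k / n\<close> but improves with probability at least \<open>1 / (3 n)\<close>, so the potential
  \<open>3 k (k - j)\<close> pays for all of them.\<close>

lemma finite_bitstrings: "finite (bitstrings k)"
  using finite_lists_length_eq[of "UNIV :: bool set" k] by (simp add: bitstrings_def)

lemma card_bitstrings: "card (bitstrings k) = 2 ^ k"
  using card_lists_length_eq[of "UNIV :: bool set" k] by (simp add: bitstrings_def card_UNIV_bool)

lemma replicate_in_bitstrings: "replicate k b \<in> bitstrings k"
  by (simp add: bitstrings_def)

lemma ones_conv_count: "ones x = count (mset x) True"
  by (induction x) (auto simp: ones_def)

lemma False_in_set_if_not_replicate: "x \<noteq> replicate (length x) True \<Longrightarrow> False \<in> set x"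
  by (metis (full_types) replicate_length_same)

lemma mset_eq_if_ones_eq:
  assumes "length x = length y" "ones x = ones y"
  shows "mset x = mset y"
proof -
  have count_False: "count (mset w) False = length w - ones w" for w
    by (induction w) (auto simp: ones_def Suc_diff_le length_filter_le)
  show ?thesis
  proof (rule multiset_eqI)
    fix b :: bool
    show "count (mset x) b = count (mset y) b"
      using assms by (cases b) (simp_all add: ones_conv_count[symmetric] count_False)
  qed
qed

definition level_set :: "nat \<Rightarrow> nat \<Rightarrow> bool list set" where
  "level_set k m = {z \<in> bitstrings k. ones z = m}"

lemma finite_level_set: "finite (level_set k m)"
  using finite_bitstrings[of k] by (simp add: level_set_def)

lemma card_level_set: "card (level_set k m) = k choose m"
proof -
  define f :: "nat set \<Rightarrow> bool list" where "f S = map (\<lambda>i. i \<in> S) [0..<k]" for S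
  define g :: "bool list \<Rightarrow> nat set" where "g z = {i. i < k \<and> z ! i}" for z
  have ones_f: "ones (f S) = card S" if "S \<subseteq> {..<k}" for S
  proof -
    have "{i. i < k \<and> f S ! i} = S"
      using that by (auto simp: f_def)
    then show ?thesis
      by (simp add: ones_def length_filter_conv_card f_def)
  qed
  have "bij_betw f {S. S \<subseteq> {..<k} \<and> card S = m} (level_set k m)"
  proof (rule bij_betw_byWitness[where f' = g])
    show "\<forall>S\<in>{S. S \<subseteq> {..<k} \<and> card S = m}. g (f S) = S"
      by (auto simp: f_def g_def)
    show "\<forall>z\<in>level_set k m. f (g z) = z"
      by (auto simp: f_def g_def level_set_def bitstrings_def intro: nth_equalityI)
    show "f ` {S. S \<subseteq> {..<k} \<and> card S = m} \<subseteq> level_set k m"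
      using ones_f by (auto simp: f_def level_set_def bitstrings_def)
    have "card (g z) = ones z" if "length z = k" for z
      using that by (simp add: g_def ones_def length_filter_conv_card)
    then show "g ` level_set k m \<subseteq> {S. S \<subseteq> {..<k} \<and> card S = m}"
      by (auto simp: g_def level_set_def bitstrings_def)
  qed
  then show ?thesis
    using n_subsets[of "{..<k}" m] by (simp add: bij_betw_same_card)
qed

lemma optimum_valley_in_level_set:
  assumes "r \<le> k"
  shows "optimum k r \<in> level_set k (k - r)" "valley k r \<in> level_set k (k - r)"
  using assms by (simp_all add: optimum_def valley_def level_set_def bitstrings_def ones_def)

lemma permute_list_inv_cancel:
  assumes "\<pi> permutes {..<length x}"
  shows "permute_list (inv \<pi>) (permute_list \<pi> x) = x"
proof -
  have "permute_list (inv \<pi>) (permute_list \<pi> x) = permute_list (\<pi> \<circ> inv \<pi>) x"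
    by (rule permute_list_compose[OF permutes_inv[OF assms], symmetric])
  then show ?thesis
    by (simp add: permutes_inv_o(1)[OF assms])
qed

lemma permute_list_eq_iff:
  assumes "\<pi> permutes {..<length x}" "length y = length x"
  shows "permute_list \<pi> y = permute_list \<pi> x \<longleftrightarrow> y = x"
  using assms by (metis permute_list_inv_cancel)

lemma permute_list_replicate:
  assumes "\<pi> permutes {..<k}"
  shows "permute_list \<pi> (replicate k a) = replicate k a"
proof (rule nth_equalityI)
  fix i
  assume "i < length (permute_list \<pi> (replicate k a))"
  then show "permute_list \<pi> (replicate k a) ! i = replicate k a ! i"
    using permutes_in_image[OF assms, of i] assms by (simp add: permute_list_nth)
qed simp

lemma ones_permute_list: "\<pi> permutes {..<length x} \<Longrightarrow> ones (permute_list \<pi> x) = ones x"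
  by (simp add: ones_conv_count)

lemma bij_betw_permute_list_bitstrings:
  assumes "\<pi> permutes {..<k}"
  shows "bij_betw (permute_list \<pi>) (bitstrings k) (bitstrings k)"
proof (rule bij_betw_byWitness[where f' = "permute_list (inv \<pi>)"])
  show "\<forall>x\<in>bitstrings k. permute_list (inv \<pi>) (permute_list \<pi> x) = x"
    using assms permute_list_inv_cancel by (auto simp: bitstrings_def)
  show "\<forall>x\<in>bitstrings k. permute_list \<pi> (permute_list (inv \<pi>) x) = x"
    using assms permute_list_inv_cancel[of "inv \<pi>"] permutes_inv[OF assms]
      inv_inv_eq[OF permutes_bij[OF assms]] by (auto simp: bitstrings_def)
qed (auto simp: bitstrings_def)

section \<open>Standard bit mutation\<close>

lemma length_of_set_pmf_mutate: "y \<in> set_pmf (mutate p x) \<Longrightarrow> length y = length x"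
  by (induction x arbitrary: y) auto

lemma finite_set_pmf_mutate: "finite (set_pmf (mutate p x))"
  by (rule finite_subset[OF _ finite_bitstrings[of "length x"]])
     (auto simp: bitstrings_def length_of_set_pmf_mutate)

lemma integrable_mutate [simp]:
  fixes f :: "bool list \<Rightarrow> real"
  shows "integrable (measure_pmf (mutate p x)) f"
  by (rule integrable_measure_pmf_finite[OF finite_set_pmf_mutate])

lemma expectation_mutate_mono:
  fixes f g :: "bool list \<Rightarrow> real"
  assumes "\<And>y. length y = length x \<Longrightarrow> f y \<le> g y"
  shows "measure_pmf.expectation (mutate p x) f \<le> measure_pmf.expectation (mutate p x) g"
  using assms by (intro integral_mono_AE) (auto simp: AE_measure_pmf_iff length_of_set_pmf_mutate)

lemma expectation_mutate_cong:
  fixes f g :: "bool list \<Rightarrow> real"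
  assumes "\<And>y. length y = length x \<Longrightarrow> f y = g y"
  shows "measure_pmf.expectation (mutate p x) f = measure_pmf.expectation (mutate p x) g"
  using assms by (intro antisym expectation_mutate_mono) auto

lemma expectation_mutate_le_const:
  fixes f :: "bool list \<Rightarrow> real"
  assumes "\<And>y. length y = length x \<Longrightarrow> f y \<le> c"
  shows "measure_pmf.expectation (mutate p x) f \<le> c"
  using expectation_mutate_mono[of x f "\<lambda>_. c"] assms by simp

definition flip_weight :: "real \<Rightarrow> bool \<Rightarrow> bool \<Rightarrow> real" where
  "flip_weight p a b = (if a = b then 1 - p else p)"

lemma pmf_mutate:
  assumes "0 \<le> p" "p \<le> 1"
  shows "pmf (mutate p x) y =
    (if length y = length x then \<Prod>i<length x. flip_weight p (x ! i) (y ! i) else 0)"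
proof (induction x arbitrary: y)
  case Nil
  then show ?case by (auto simp: pmf_return)
next
  case (Cons b bs)
  have map_Cons: "mutate p (b # bs) =
      bind_pmf (bernoulli_pmf p) (\<lambda>f. map_pmf (Cons (if f then \<not> b else b)) (mutate p bs))"
    by (simp add: map_pmf_def)
  have pmf_map_Cons: "pmf (map_pmf (Cons d) M) [] = 0"
      "pmf (map_pmf (Cons d) M) (c # ys) = of_bool (d = c) * pmf M ys"
    for d c :: bool and M :: "bool list pmf" and ys
    by (auto simp: pmf_map_inj' inj_def intro!: pmf_map_outside)
  have pmf_Cons: "pmf (mutate p (b # bs)) y' =
      measure_pmf.expectation (bernoulli_pmf p)
        (\<lambda>f. pmf (map_pmf (Cons (if f then \<not> b else b)) (mutate p bs)) y')" for y'
    by (simp only: map_Cons pmf_bind)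
  show ?case
  proof (cases y)
    case Nil
    then show ?thesis by (simp only: pmf_Cons pmf_map_Cons) simp
  next
    case (Cons c ys)
    have "pmf (mutate p (b # bs)) (c # ys) = flip_weight p b c * pmf (mutate p bs) ys"
      using assms by (simp only: pmf_Cons pmf_map_Cons integral_bernoulli_pmf)
        (simp add: flip_weight_def)
    then show ?thesis
      by (simp add: Cons Cons.IH prod.lessThan_Suc_shift del: prod.lessThan_Suc)
  qed
qed

lemma pmf_mutate_self:
  assumes "0 \<le> p" "p \<le> 1"
  shows "pmf (mutate p x) x = (1 - p) ^ length x"
  using assms by (simp add: pmf_mutate flip_weight_def)

lemma pmf_mutate_flip:
  assumes "0 \<le> p" "p \<le> 1" "i < length x"
  shows "pmf (mutate p x) (x[i := \<not> x ! i]) = p * (1 - p) ^ (length x - 1)"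
proof -
  have "(\<Prod>j<length x. flip_weight p (x ! j) (x[i := \<not> x ! i] ! j)) =
      (\<Prod>j<length x. if j = i then p else 1 - p)"
    by (rule prod.cong) (auto simp: flip_weight_def nth_list_update)
  also have "\<dots> = p * (1 - p) ^ (length x - 1)"
    using assms(3) by (simp add: prod.If_cases Int_absorb1 Diff_eq[symmetric])
  finally show ?thesis
    using assms by (simp add: pmf_mutate)
qed

lemma mutate_permute_list:
  assumes "0 \<le> p" "p \<le> 1" "\<pi> permutes {..<length x}"
  shows "mutate p (permute_list \<pi> x) = map_pmf (permute_list \<pi>) (mutate p x)"
proof (rule pmf_eqI)
  fix w
  let ?B = "bitstrings (length x)"
  have bij: "bij_betw (permute_list \<pi>) ?B ?B"
    using bij_betw_permute_list_bitstrings[OF assms(3)] .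
  have support: "set_pmf (mutate p x) \<subseteq> ?B"
    by (auto simp: bitstrings_def length_of_set_pmf_mutate)
  show "pmf (mutate p (permute_list \<pi> x)) w = pmf (map_pmf (permute_list \<pi>) (mutate p x)) w"
  proof (cases "w \<in> ?B")
    case False
    then have "w \<notin> permute_list \<pi> ` set_pmf (mutate p x)"
      using support bij_betw_imp_surj_on[OF bij] by blast
    then show ?thesis
      using False assms by (simp add: pmf_map_outside pmf_mutate bitstrings_def)
  next
    case True
    then obtain v where v: "v \<in> ?B" "w = permute_list \<pi> v"
      using bij_betw_imp_surj_on[OF bij] by blast
    have "pmf (mutate p (permute_list \<pi> x)) (permute_list \<pi> v) = pmf (mutate p x) v"
    proof -
      have "(\<Prod>i<length x. flip_weight p (permute_list \<pi> x ! i) (permute_list \<pi> v ! i)) =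
          (\<Prod>i<length x. flip_weight p (x ! \<pi> i) (v ! \<pi> i))"
        using v(1) assms(3) by (intro prod.cong) (auto simp: permute_list_nth bitstrings_def)
      also have "\<dots> = (\<Prod>i<length x. flip_weight p (x ! i) (v ! i))"
        using prod.permute[OF assms(3), of "\<lambda>i. flip_weight p (x ! i) (v ! i)"] by (simp add: comp_def)
      finally show ?thesis
        using v(1) assms by (simp add: pmf_mutate bitstrings_def)
    qed
    moreover have "pmf (map_pmf (permute_list \<pi>) (mutate p x)) (permute_list \<pi> v) = pmf (mutate p x) v"
    proof (cases "v \<in> set_pmf (mutate p x)")
      case True
      then show ?thesis
        by (rule pmf_map_inj[OF inj_on_subset[OF bij_betw_imp_inj_on[OF bij] support]])
    next
      case False
      then have "permute_list \<pi> v \<notin> permute_list \<pi> ` set_pmf (mutate p x)"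
        by (simp add: inj_on_image_mem_iff[OF bij_betw_imp_inj_on[OF bij] v(1) support])
      then show ?thesis
        using False by (simp add: pmf_map_outside set_pmf_iff)
    qed
    ultimately show ?thesis
      using v(2) by simp
  qed
qed

lemma prob_mutate_changes_le:
  assumes "0 \<le> p" "p \<le> 1"
  shows "measure_pmf.prob (mutate p x) {y. y \<noteq> x} \<le> real (length x) * p"
proof -
  have "{y. y \<noteq> x} = UNIV - {x}"
    by blast
  then have "measure_pmf.prob (mutate p x) {y. y \<noteq> x} = 1 - (1 - p) ^ length x"
    using measure_pmf.prob_compl[of "{x}" "mutate p x"] assms
    by (simp add: measure_pmf_single pmf_mutate_self)
  also have "\<dots> \<le> real (length x) * p"
    using Bernoulli_inequality[of "- p" "length x"] assms by simp
  finally show ?thesis .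
qed

lemma prob_mutate_improves_ge:
  assumes "0 \<le> p" "p \<le> 1" "False \<in> set x"
  shows "p * (1 - p) ^ (length x - 1) \<le> measure_pmf.prob (mutate p x) {y. ones x < ones y}"
proof -
  obtain i where i: "i < length x" "\<not> x ! i"
    using assms(3) by (auto simp: in_set_conv_nth)
  have "ones (x[i := \<not> x ! i]) = ones x + 1"
    using i by (simp add: ones_conv_count mset_update)
  then have "{x[i := \<not> x ! i]} \<subseteq> {y. ones x < ones y}"
    by simp
  then have "pmf (mutate p x) (x[i := \<not> x ! i]) \<le> measure_pmf.prob (mutate p x) {y. ones x < ones y}"
    by (metis measure_pmf.finite_measure_mono measure_pmf_single sets_measure_pmf UNIV_I)
  then show ?thesis
    using pmf_mutate_flip[OF assms(1,2) i(1)] by simp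
qed

lemma one_div_real_nat_le_1: "1 / real n \<le> 1"
  by (cases n) simp_all

lemma one_third_le_power_one_minus_inverse:
  assumes "k \<le> n"
  shows "1 / 3 \<le> (1 - 1 / real n) ^ (k - 1)"
proof (cases "n \<le> 1")
  case True
  then show ?thesis
    using assms by (cases "k = 0") (auto simp: le_Suc_eq)
next
  case False
  define m where "m = n - 1"
  have m: "1 \<le> m" "n = m + 1"
    using False by (auto simp: m_def)
  have "(1 + 1 / real m) ^ m \<le> exp (1 / real m) ^ m"
    by (rule power_mono) (auto simp: exp_ge_add_one_self)
  also have "\<dots> = exp 1"
    using m(1) by (simp add: exp_of_nat_mult[symmetric])
  also have "\<dots> \<le> 3"
    by (rule exp_le)
  finally have "1 / 3 \<le> 1 / (1 + 1 / real m) ^ m"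
    using m(1) by (simp add: field_simps)
  also have "\<dots> = (1 - 1 / real n) ^ (n - 1)"
    using m by (simp add: field_simps power_one_over)
  also have "\<dots> \<le> (1 - 1 / real n) ^ (k - 1)"
    using assms one_div_real_nat_le_1[of n] by (intro power_decreasing) auto
  finally show ?thesis .
qed

section \<open>The (1+1) EA on OneMax\<close>

definition onemax_select :: "bool list \<Rightarrow> bool list \<Rightarrow> bool list" where
  "onemax_select x y = (if ones x \<le> ones y then y else x)"

fun onemax_hit :: "nat \<Rightarrow> nat \<Rightarrow> bool list \<Rightarrow> nat \<Rightarrow> bool list \<Rightarrow> real" where
  "onemax_hit k n z 0 x = 0"
| "onemax_hit k n z (Suc T) x =
     (if x = replicate k True then 0
      else measure_pmf.expectation (mutate (1 / real n) x)
             (\<lambda>y. if y = z then 1 else onemax_hit k n z T (onemax_select x y)))"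

fun onemax_level_count :: "nat \<Rightarrow> nat \<Rightarrow> nat \<Rightarrow> nat \<Rightarrow> bool list \<Rightarrow> real" where
  "onemax_level_count k n m 0 x = 0"
| "onemax_level_count k n m (Suc T) x =
     (if x = replicate k True then 0
      else measure_pmf.expectation (mutate (1 / real n) x)
             (\<lambda>y. of_bool (ones y = m \<and> y \<noteq> x) + onemax_level_count k n m T (onemax_select x y)))"

lemma onemax_hit_nonneg: "0 \<le> onemax_hit k n z T x"
  by (induction T arbitrary: x) (auto intro!: integral_nonneg)

lemma pov_within_le_1: "pov_within k r n T x \<le> 1"
  by (induction T arbitrary: x) (auto intro!: expectation_mutate_le_const)

lemma pov_within_le_onemax_hit:
  assumes "x \<noteq> optimum k r" "x \<noteq> valley k r"
  shows "pov_within k r n T x \<le> onemax_hit k n (optimum k r) T x + onemax_hit k n (valley k r) T x"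
  using assms
proof (induction T arbitrary: x)
  case 0
  then show ?case by simp
next
  case (Suc T)
  let ?o = "optimum k r" and ?v = "valley k r"
  have "pov_within k r n (Suc T) x \<le> measure_pmf.expectation (mutate (1 / real n) x)
      (\<lambda>y. (if y = ?o then 1 else onemax_hit k n ?o T (onemax_select x y)) +
           (if y = ?v then 1 else onemax_hit k n ?v T (onemax_select x y)))"
    if "x \<noteq> replicate k True"
  proof (simp only: pov_within.simps if_not_P[OF that], intro expectation_mutate_mono)
    fix y
    show "(if y = ?o \<or> y = ?v then 1
           else pov_within k r n T (if fork k r x \<le> fork k r y then y else x)) \<le>
        (if y = ?o then 1 else onemax_hit k n ?o T (onemax_select x y)) +
        (if y = ?v then 1 else onemax_hit k n ?v T (onemax_select x y))"
    proof (cases "y = ?o \<or> y = ?v")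
      case True
      then show ?thesis using onemax_hit_nonneg[of k n] by auto
    next
      case False
      then have "(if fork k r x \<le> fork k r y then y else x) = onemax_select x y"
        using Suc.prems by (simp add: fork_def onemax_select_def)
      moreover have "onemax_select x y \<noteq> ?o" "onemax_select x y \<noteq> ?v"
        using False Suc.prems by (auto simp: onemax_select_def)
      ultimately show ?thesis
        using False Suc.IH by simp
    qed
  qed
  then show ?case
    by simp
qed

lemma sum_pov_within_le:
  assumes "r \<le> k"
  shows "(\<Sum>x\<in>bitstrings k. pov_within k r n T x) \<le>
     2 + (\<Sum>x\<in>bitstrings k - {optimum k r}. onemax_hit k n (optimum k r) T x)
       + (\<Sum>x\<in>bitstrings k - {valley k r}. onemax_hit k n (valley k r) T x)"
proof -
  let ?B = "bitstrings k" and ?o = "optimum k r" and ?v = "valley k r"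
  have "{?o, ?v} \<subseteq> ?B"
    using optimum_valley_in_level_set[OF assms] by (auto simp: level_set_def)
  then have "(\<Sum>x\<in>?B. pov_within k r n T x) =
      (\<Sum>x\<in>?B - {?o, ?v}. pov_within k r n T x) + (\<Sum>x\<in>{?o, ?v}. pov_within k r n T x)"
    by (rule sum.subset_diff[OF _ finite_bitstrings])
  also have "(\<Sum>x\<in>{?o, ?v}. pov_within k r n T x) \<le> 2"
  proof -
    have "(\<Sum>x\<in>{?o, ?v}. pov_within k r n T x) \<le> real (card {?o, ?v}) * 1"
      by (rule sum_bounded_above) (rule pov_within_le_1)
    also have "\<dots> \<le> 2"
      by (cases "?o = ?v") simp_all
    finally show ?thesis .
  qed
  also have "(\<Sum>x\<in>?B - {?o, ?v}. pov_within k r n T x) \<le>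
      (\<Sum>x\<in>?B - {?o, ?v}. onemax_hit k n ?o T x + onemax_hit k n ?v T x)"
    by (intro sum_mono pov_within_le_onemax_hit) auto
  also have "\<dots> \<le> (\<Sum>x\<in>?B - {?o}. onemax_hit k n ?o T x) + (\<Sum>x\<in>?B - {?v}. onemax_hit k n ?v T x)"
    unfolding sum.distrib
    by (intro add_mono sum_mono2) (auto simp: finite_bitstrings onemax_hit_nonneg)
  finally show ?thesis
    by simp
qed

lemma onemax_hit_permute_list:
  assumes "\<pi> permutes {..<k}" "length z = k" "length x = k"
  shows "onemax_hit k n (permute_list \<pi> z) T (permute_list \<pi> x) = onemax_hit k n z T x"
  using assms(3)
proof (induction T arbitrary: x)
  case 0
  then show ?case by simp
next
  case (Suc T)
  have perm: "\<pi> permutes {..<length x}"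
    using assms(1) Suc.prems by simp
  have step: "onemax_hit k n (permute_list \<pi> z) T (onemax_select (permute_list \<pi> x) (permute_list \<pi> y)) =
      onemax_hit k n z T (onemax_select x y)" if "length y = length x" for y
  proof -
    have "onemax_select (permute_list \<pi> x) (permute_list \<pi> y) = permute_list \<pi> (onemax_select x y)"
      using perm that by (simp add: onemax_select_def ones_permute_list)
    then show ?thesis
      using Suc.IH[of "onemax_select x y"] Suc.prems that by (simp add: onemax_select_def)
  qed
  have "permute_list \<pi> x = replicate k True \<longleftrightarrow> x = replicate k True"
    using permute_list_eq_iff[OF perm, of "replicate k True"] Suc.prems
    by (auto simp: permute_list_replicate[OF assms(1)])
  moreover have "measure_pmf.expectation (mutate (1 / real n) (permute_list \<pi> x))
      (\<lambda>y. if y = permute_list \<pi> z then 1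
           else onemax_hit k n (permute_list \<pi> z) T (onemax_select (permute_list \<pi> x) y)) =
    measure_pmf.expectation (mutate (1 / real n) x)
      (\<lambda>y. if y = z then 1 else onemax_hit k n z T (onemax_select x y))"
    using assms(2) Suc.prems
    by (simp add: mutate_permute_list[OF _ one_div_real_nat_le_1 perm])
      (intro expectation_mutate_cong, simp add: permute_list_eq_iff[of \<pi> z] assms(1) step)
  ultimately show ?case
    by simp
qed

lemma sum_if_eq_split:
  fixes h :: "'a \<Rightarrow> real"
  assumes "finite A"
  shows "(\<Sum>z\<in>A. if y = z then 1 else h z) = of_bool (y \<in> A) + (\<Sum>z\<in>A - {y}. h z)"
proof -
  have "A \<inter> {z. y = z} = A \<inter> {y}" "A \<inter> - {z. y = z} = A - {y}"
    by auto
  then show ?thesis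
    using assms by (simp add: sum.If_cases)
qed

lemma sum_onemax_hit_le_level_count:
  assumes "length x = k"
  shows "(\<Sum>z\<in>level_set k m - {x}. onemax_hit k n z T x) \<le> onemax_level_count k n m T x"
  using assms
proof (induction T arbitrary: x)
  case 0
  then show ?case by simp
next
  case (Suc T)
  let ?E = "measure_pmf.expectation (mutate (1 / real n) x)"
  have "(\<Sum>z\<in>level_set k m - {x}. ?E (\<lambda>y. if y = z then 1 else onemax_hit k n z T (onemax_select x y)))
      = ?E (\<lambda>y. \<Sum>z\<in>level_set k m - {x}. if y = z then 1 else onemax_hit k n z T (onemax_select x y))"
    by simp
  also have "\<dots> \<le> ?E (\<lambda>y. of_bool (ones y = m \<and> y \<noteq> x) + onemax_level_count k n m T (onemax_select x y))"
  proof (rule expectation_mutate_mono)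
    fix y :: "bool list"
    assume "length y = length x"
    define w where "w = onemax_select x y"
    have "length w = k" and "w \<in> {x, y}"
      using Suc.prems \<open>length y = length x\<close> by (auto simp: w_def onemax_select_def)
    have "y \<in> level_set k m - {x} \<longleftrightarrow> ones y = m \<and> y \<noteq> x"
      using Suc.prems \<open>length y = length x\<close> by (simp add: level_set_def bitstrings_def)
    then have "(\<Sum>z\<in>level_set k m - {x}. if y = z then 1 else onemax_hit k n z T w) =
        of_bool (ones y = m \<and> y \<noteq> x) + (\<Sum>z\<in>level_set k m - {x} - {y}. onemax_hit k n z T w)"
      by (simp add: sum_if_eq_split finite_level_set)
    also have "(\<Sum>z\<in>level_set k m - {x} - {y}. onemax_hit k n z T w) \<le>
        (\<Sum>z\<in>level_set k m - {w}. onemax_hit k n z T w)"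
      using \<open>w \<in> {x, y}\<close> by (intro sum_mono2) (auto simp: finite_level_set onemax_hit_nonneg)
    also have "\<dots> \<le> onemax_level_count k n m T w"
      using Suc.IH[OF \<open>length w = k\<close>] .
    finally show "(\<Sum>z\<in>level_set k m - {x}. if y = z then 1 else onemax_hit k n z T w) \<le>
        of_bool (ones y = m \<and> y \<noteq> x) + onemax_level_count k n m T w"
      by simp
  qed
  finally show ?case
    by simp
qed

section \<open>A potential bound for the level count\<close>

text \<open>The factor \<open>3 k\<close> balances the probability of at most \<open>k / n\<close> of creating a new offspring
  against the probability of at least \<open>1 / (3 n)\<close> of an improvement; the summand 1 below level
  \<open>m\<close> pays for the offspring with which the run enters level \<open>m\<close>.\<close>

definition level_potential :: "nat \<Rightarrow> nat \<Rightarrow> nat \<Rightarrow> real" where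
  "level_potential k m j =
     (if j < m then 1 + 3 * real k * (real k - real m) else 3 * real k * (real k - real j))"

lemma level_potential_le: "level_potential k m j \<le> 1 + 3 * real k * (real k - real m)"
proof (cases "j < m")
  case False
  then have "3 * real k * (real k - real j) \<le> 3 * real k * (real k - real m)"
    by (intro mult_left_mono) auto
  then show ?thesis
    using False by (simp add: level_potential_def)
qed (simp add: level_potential_def)

lemma expectation_level_count_step_le_above:
  assumes "m \<le> ones x" "k \<le> n" "length x = k" "x \<noteq> replicate k True"
    and potential: "\<And>y. length y = k \<Longrightarrow> c y \<le> level_potential k m (ones y)"
  shows "measure_pmf.expectation (mutate (1 / real n) x)
           (\<lambda>y. of_bool (ones y = m \<and> y \<noteq> x) + c (onemax_select x y))
         \<le> level_potential k m (ones x)"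
proof -
  let ?M = "mutate (1 / real n) x" and ?j = "real (ones x)"
  have "False \<in> set x"
    using False_in_set_if_not_replicate assms(3,4) by simp
  have "measure_pmf.expectation ?M (\<lambda>y. of_bool (ones y = m \<and> y \<noteq> x) + c (onemax_select x y))
      \<le> measure_pmf.expectation ?M (\<lambda>y. indicator {y. y \<noteq> x} y
            + (3 * real k * (real k - ?j) - 3 * real k * indicator {y. ones x < ones y} y))"
  proof (rule expectation_mutate_mono)
    fix y :: "bool list"
    assume "length y = length x"
    then have "c (onemax_select x y) \<le> level_potential k m (ones (onemax_select x y))"
      using assms(3) by (intro potential) (simp add: onemax_select_def)
    also have "\<dots> = 3 * real k * (real k - real (ones (onemax_select x y)))"
      using assms(1) by (simp add: level_potential_def onemax_select_def)
    also have "\<dots> \<le> 3 * real k * (real k - ?j - indicator {y. ones x < ones y} y)"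
      by (intro mult_left_mono) (auto simp: onemax_select_def indicator_def)
    finally have "c (onemax_select x y) \<le> 3 * real k * (real k - ?j - indicator {y. ones x < ones y} y)" .
    moreover have "of_bool (ones y = m \<and> y \<noteq> x) \<le> (indicator {y. y \<noteq> x} y :: real)"
      by (simp add: indicator_def)
    ultimately show "of_bool (ones y = m \<and> y \<noteq> x) + c (onemax_select x y) \<le>
        indicator {y. y \<noteq> x} y + (3 * real k * (real k - ?j) - 3 * real k * indicator {y. ones x < ones y} y)"
      by (simp add: algebra_simps)
  qed
  also have "\<dots> = measure_pmf.prob ?M {y. y \<noteq> x} + 3 * real k * (real k - ?j)
      - 3 * real k * measure_pmf.prob ?M {y. ones x < ones y}"
    by simp
  also have "\<dots> \<le> real k / real n + 3 * real k * (real k - ?j) - 3 * real k * (1 / (3 * real n))"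
  proof -
    have "1 / (3 * real n) \<le> 1 / real n * (1 - 1 / real n) ^ (k - 1)"
      using mult_left_mono[OF one_third_le_power_one_minus_inverse[OF assms(2)], of "1 / real n"]
      by simp
    also have "\<dots> \<le> measure_pmf.prob ?M {y. ones x < ones y}"
      using prob_mutate_improves_ge[OF _ one_div_real_nat_le_1 \<open>False \<in> set x\<close>] assms(3)
      by simp
    finally have "3 * real k * (1 / (3 * real n)) \<le> 3 * real k * measure_pmf.prob ?M {y. ones x < ones y}"
      by (rule mult_left_mono) simp
    then show ?thesis
      using prob_mutate_changes_le[OF _ one_div_real_nat_le_1, of n x] assms(3) by simp
  qed
  also have "\<dots> = level_potential k m (ones x)"
    using assms(1) by (simp add: level_potential_def)
  finally show ?thesis .
qed

lemma expectation_level_count_step_le: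
  assumes "m \<le> k" "k \<le> n" "length x = k" "x \<noteq> replicate k True"
    and potential: "\<And>y. length y = k \<Longrightarrow> c y \<le> level_potential k m (ones y)"
  shows "measure_pmf.expectation (mutate (1 / real n) x)
           (\<lambda>y. of_bool (ones y = m \<and> y \<noteq> x) + c (onemax_select x y))
         \<le> level_potential k m (ones x)"
proof (cases "ones x < m")
  case True
  have "measure_pmf.expectation (mutate (1 / real n) x)
           (\<lambda>y. of_bool (ones y = m \<and> y \<noteq> x) + c (onemax_select x y))
         \<le> 1 + 3 * real k * (real k - real m)"
  proof (rule expectation_mutate_le_const)
    fix y :: "bool list"
    assume "length y = length x"
    then have "c (onemax_select x y) \<le> level_potential k m (ones (onemax_select x y))"
      using assms(3) by (intro potential) (simp add: onemax_select_def)
    moreover have "onemax_select x y = y" if "ones y = m"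
      using True that by (simp add: onemax_select_def)
    ultimately show "of_bool (ones y = m \<and> y \<noteq> x) + c (onemax_select x y) \<le> 1 + 3 * real k * (real k - real m)"
      using level_potential_le[of k m "ones (onemax_select x y)"] by (auto simp: level_potential_def)
  qed
  then show ?thesis
    using True by (simp add: level_potential_def)
next
  case False
  then show ?thesis
    using expectation_level_count_step_le_above[OF _ assms(2-4) potential] by simp
qed

lemma onemax_level_count_le:
  assumes "m \<le> k" "k \<le> n" "length x = k"
  shows "onemax_level_count k n m T x \<le> level_potential k m (ones x)"
  using assms(3)
proof (induction T arbitrary: x)
  case 0
  have "ones x \<le> k"
    using 0 length_filter_le[of id x] by (simp add: ones_def)
  then show ?case
    using assms(1) by (simp add: level_potential_def)
next
  case (Suc T)
  show ?case
  proof (cases "x = replicate k True")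
    case True
    then show ?thesis
      using assms(1) by (simp add: level_potential_def ones_def)
  next
    case False
    then show ?thesis
      using expectation_level_count_step_le[OF assms(1,2) Suc.prems False Suc.IH] by simp
  qed
qed

section \<open>Symmetry and the final bound\<close>

lemma sum_onemax_hit_eq_if_ones_eq:
  assumes "length z = k" "length z' = k" "ones z = ones z'"
  shows "(\<Sum>x\<in>bitstrings k - {z}. onemax_hit k n z T x) =
    (\<Sum>x\<in>bitstrings k - {z'}. onemax_hit k n z' T x)"
proof -
  obtain \<pi> where \<pi>: "\<pi> permutes {..<length z'}" "permute_list \<pi> z' = z"
    using mset_eq_permutation[OF mset_eq_if_ones_eq] assms by metis
  then have "\<pi> permutes {..<k}"
    using assms(2) by simp
  let ?f = "permute_list \<pi>"
  have inj: "inj_on ?f (bitstrings k)"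
    using bij_betw_imp_inj_on[OF bij_betw_permute_list_bitstrings] \<open>\<pi> permutes {..<k}\<close> .
  have "?f ` (bitstrings k - {z'}) = bitstrings k - {z}"
    using inj_on_image_set_diff[OF inj, of "bitstrings k" "{z'}"] assms(2) \<pi>(2)
      bij_betw_imp_surj_on[OF bij_betw_permute_list_bitstrings[OF \<open>\<pi> permutes {..<k}\<close>]]
    by (simp add: bitstrings_def)
  then have "(\<Sum>x\<in>bitstrings k - {z}. onemax_hit k n z T x) =
      (\<Sum>x\<in>bitstrings k - {z'}. onemax_hit k n (?f z') T (?f x))"
    using \<pi>(2) sum.reindex[OF inj_on_diff[OF inj], of "onemax_hit k n z T" "{z'}"] by simp
  also have "\<dots> = (\<Sum>x\<in>bitstrings k - {z'}. onemax_hit k n z' T x)"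
    using \<open>\<pi> permutes {..<k}\<close> assms(2)
    by (intro sum.cong refl) (simp add: onemax_hit_permute_list bitstrings_def)
  finally show ?thesis .
qed

lemma sum_onemax_hit_le:
  assumes "m \<le> k" "k \<le> n" "z \<in> level_set k m"
  shows "real (k choose m) * (\<Sum>x\<in>bitstrings k - {z}. onemax_hit k n z T x)
    \<le> 2 ^ k * (1 + 3 * real k * (real k - real m))"
proof -
  let ?B = "bitstrings k" and ?L = "level_set k m"
  have "(\<Sum>z'\<in>?L. \<Sum>x\<in>?B - {z'}. onemax_hit k n z' T x) = (\<Sum>z'\<in>?L. \<Sum>x\<in>?B - {z}. onemax_hit k n z T x)"
    using assms(3)
    by (intro sum.cong[OF refl] sum_onemax_hit_eq_if_ones_eq) (auto simp: level_set_def bitstrings_def)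
  then have "real (k choose m) * (\<Sum>x\<in>?B - {z}. onemax_hit k n z T x)
      = (\<Sum>z'\<in>?L. \<Sum>x\<in>?B - {z'}. onemax_hit k n z' T x)"
    by (simp add: card_level_set)
  also have "\<dots> = (\<Sum>z'\<in>?L. \<Sum>x\<in>{x \<in> ?B. x \<noteq> z'}. onemax_hit k n z' T x)"
    by (simp add: set_diff_eq)
  also have "\<dots> = (\<Sum>x\<in>?B. \<Sum>z'\<in>{z' \<in> ?L. x \<noteq> z'}. onemax_hit k n z' T x)"
    by (rule sum.swap_restrict[OF finite_level_set finite_bitstrings])
  also have "\<dots> = (\<Sum>x\<in>?B. \<Sum>z'\<in>?L - {x}. onemax_hit k n z' T x)"
    by (intro sum.cong refl) auto
  also have "\<dots> \<le> (\<Sum>x\<in>?B. 1 + 3 * real k * (real k - real m))"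
  proof (rule sum_mono)
    fix x
    assume "x \<in> ?B"
    then have "length x = k"
      by (simp add: bitstrings_def)
    then have "(\<Sum>z'\<in>?L - {x}. onemax_hit k n z' T x) \<le> onemax_level_count k n m T x"
      by (rule sum_onemax_hit_le_level_count)
    also have "\<dots> \<le> level_potential k m (ones x)"
      by (rule onemax_level_count_le[OF assms(1,2) \<open>length x = k\<close>])
    also have "\<dots> \<le> 1 + 3 * real k * (real k - real m)"
      by (rule level_potential_le)
    finally show "(\<Sum>z'\<in>?L - {x}. onemax_hit k n z' T x) \<le> 1 + 3 * real k * (real k - real m)" .
  qed
  also have "\<dots> = 2 ^ k * (1 + 3 * real k * (real k - real m))"
    by (simp add: card_bitstrings)
  finally show ?thesis .
qed

lemma expectation_pov_within_le:
  assumes "r \<le> k" "k \<le> n"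
  shows "measure_pmf.expectation (pmf_of_set (bitstrings k)) (pov_within k r n T)
    \<le> (4 + 6 * real k * real r) / real (k choose r)"
proof -
  define C where "C = real (k choose r)"
  have C: "0 < C" "C \<le> 2 ^ k"
    using assms(1) binomial_le_pow2[of k r] by (simp_all add: C_def zero_less_binomial)
  have hit_le: "(\<Sum>x\<in>bitstrings k - {z}. onemax_hit k n z T x) \<le> 2 ^ k * (1 + 3 * real k * real r) / C"
    if "z \<in> level_set k (k - r)" for z
    using sum_onemax_hit_le[OF _ assms(2) that] C(1) assms(1)
    by (simp add: C_def binomial_symmetric[OF assms(1), symmetric] of_nat_diff field_simps)
  have "measure_pmf.expectation (pmf_of_set (bitstrings k)) (pov_within k r n T) =
      (\<Sum>x\<in>bitstrings k. pov_within k r n T x) / 2 ^ k"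
    using finite_bitstrings[of k] replicate_in_bitstrings[of k True]
    by (subst integral_pmf_of_set) (auto simp: card_bitstrings)
  also have "\<dots> \<le> (2 + 2 * (2 ^ k * (1 + 3 * real k * real r) / C)) / 2 ^ k"
    using sum_pov_within_le[OF assms(1), of n T] hit_le[OF optimum_valley_in_level_set(1)[OF assms(1)]]
      hit_le[OF optimum_valley_in_level_set(2)[OF assms(1)]]
    by (intro divide_right_mono) simp_all
  also have "\<dots> = 2 / 2 ^ k + 2 * (1 + 3 * real k * real r) / C"
    by (simp add: field_simps)
  also have "\<dots> \<le> 2 / C + 2 * (1 + 3 * real k * real r) / C"
    using C by (intro add_right_mono divide_left_mono) auto
  also have "\<dots> = (4 + 6 * real k * real r) / real (k choose r)"
    using C(1) unfolding C_def by (simp add: field_simps)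
  finally show ?thesis .
qed

lemma linear_div_binomial_le:
  assumes "1 \<le> r" "r \<le> k"
  shows "(4 + 6 * real k * real r) / real (k choose r) \<le> (4 + 6 * real r) * real r ^ r / real k ^ (r - 1)"
proof -
  have k: "1 \<le> real k"
    using assms by simp
  have "real k ^ r / real r ^ r \<le> real (k choose r)"
    using binomial_ge_n_over_k_pow_k[OF assms(2)] by (simp add: power_divide)
  moreover have "4 + 6 * real k * real r \<le> (4 + 6 * real r) * real k"
    using k by (simp add: algebra_simps)
  ultimately have "(4 + 6 * real k * real r) / real (k choose r) \<le> (4 + 6 * real r) * real k / (real k ^ r / real r ^ r)"
    using assms k by (intro frac_le) auto
  also have "\<dots> = (4 + 6 * real r) * real r ^ r / real k ^ (r - 1)"
    using assms k by (cases r) (simp_all add: field_simps)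
  finally show ?thesis .
qed

theorem lemma4:
  fixes r :: nat
  assumes "r \<ge> 2"
  shows "\<exists>C>0. \<forall>k n. 2 * r \<le> k \<and> k \<le> n \<longrightarrow> p_ov k r n \<le> C / real k ^ (r - 1)"
proof (intro exI conjI allI impI)
  show "0 < (4 + 6 * real r) * real r ^ r"
    using assms by simp
  fix k n
  assume "2 * r \<le> k \<and> k \<le> n"
  then have "1 \<le> r" "r \<le> k" "k \<le> n"
    using assms by auto
  have "measure_pmf.expectation (pmf_of_set (bitstrings k)) (pov_within k r n T)
      \<le> (4 + 6 * real r) * real r ^ r / real k ^ (r - 1)" for T
    using order_trans[OF expectation_pov_within_le[OF \<open>r \<le> k\<close> \<open>k \<le> n\<close>]
        linear_div_binomial_le[OF \<open>1 \<le> r\<close> \<open>r \<le> k\<close>]] .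
  then show "p_ov k r n \<le> (4 + 6 * real r) * real r ^ r / real k ^ (r - 1)"
    unfolding p_ov_def by (rule cSUP_least[OF UNIV_not_empty])
qed

end
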